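(* Let $G=(A\cup B,E)$ be a bipartite graph that has a grounded L-representation which is nice with respect to the bipartition $(A,B)$. Then $G$ is a stick graph.
   Context: An L-shape is the union of a vertical segment and a horizontal segment such that the bottom end-point of the vertical segment coincides with the left end-point of the horizontal segment; the top end-point of the vertical segment is its anchor. A grounded L-representation of a graph assigns an L-shape to each vertex, all anchors lying on a common horizontal line, so that two vertices are adjacent iff their L-shapes intersect. For a bipartite graph $G=(A\cup B,E)$, such a representation is nice if every L-shape representing a vertex of $A$ meets other L-shapes only on its horizontal segment, and every L-shape representing a vertex of $B$ meets other L-shapes only on its vertical segment. A stick graph is a bipartite graph that is the intersection graph of a set of vertical segments (one part) and a set of horizontal segments (the other part) such that the bottom end-points of the vertical segments and the left end-points of the horizontal segments all lie on a common straight line of slope $-1$. *)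

theory Defs
  imports Main "HOL.Real"
begin

definition bipartite_graph :: "'v set \<Rightarrow> 'v set \<Rightarrow> ('v \<Rightarrow> 'v \<Rightarrow> bool) \<Rightarrow> bool" where
  "bipartite_graph A B E \<longleftrightarrow> finite A \<and> finite B \<and> A \<inter> B = {} \<and>
     (\<forall>u v. E u v \<longrightarrow> E v u) \<and>
     (\<forall>u v. E u v \<longrightarrow> (u \<in> A \<and> v \<in> B) \<or> (u \<in> B \<and> v \<in> A))"

definition vseg :: "real \<Rightarrow> real \<Rightarrow> real \<Rightarrow> (real \<times> real) set" where
  "vseg x y1 y2 = {(x, y) | y. y1 \<le> y \<and> y \<le> y2}"

definition hseg :: "real \<Rightarrow> real \<Rightarrow> real \<Rightarrow> (real \<times> real) set" where
  "hseg y x1 x2 = {(x, y) | x. x1 \<le> x \<and> x \<le> x2}"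

definition L_vert :: "real \<Rightarrow> real \<Rightarrow> real \<Rightarrow> (real \<times> real) set" where
  "L_vert c ax h = vseg ax (c - h) c"

definition L_horiz :: "real \<Rightarrow> real \<Rightarrow> real \<Rightarrow> real \<Rightarrow> (real \<times> real) set" where
  "L_horiz c ax h w = hseg (c - h) ax (ax + w)"

definition L_shape :: "real \<Rightarrow> real \<Rightarrow> real \<Rightarrow> real \<Rightarrow> (real \<times> real) set" where
  "L_shape c ax h w = L_vert c ax h \<union> L_horiz c ax h w"

definition grounded_L_rep ::
  "'v set \<Rightarrow> ('v \<Rightarrow> 'v \<Rightarrow> bool) \<Rightarrow> real \<Rightarrow> ('v \<Rightarrow> real) \<Rightarrow> ('v \<Rightarrow> real) \<Rightarrow> ('v \<Rightarrow> real) \<Rightarrow> bool" where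
  "grounded_L_rep V E c ax h w \<longleftrightarrow>
     (\<forall>v\<in>V. h v > 0 \<and> w v > 0) \<and>
     (\<forall>u\<in>V. \<forall>v\<in>V. u \<noteq> v \<longrightarrow>
        (E u v \<longleftrightarrow> L_shape c (ax u) (h u) (w u) \<inter> L_shape c (ax v) (h v) (w v) \<noteq> {}))"

definition nice_grounded_L_rep ::
  "'v set \<Rightarrow> 'v set \<Rightarrow> ('v \<Rightarrow> 'v \<Rightarrow> bool) \<Rightarrow> real \<Rightarrow> ('v \<Rightarrow> real) \<Rightarrow> ('v \<Rightarrow> real) \<Rightarrow> ('v \<Rightarrow> real) \<Rightarrow> bool" where
  "nice_grounded_L_rep A B E c ax h w \<longleftrightarrow>
     grounded_L_rep (A \<union> B) E c ax h w \<and>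
     (\<forall>a\<in>A. \<forall>v\<in>A \<union> B. v \<noteq> a \<longrightarrow>
        L_shape c (ax a) (h a) (w a) \<inter> L_shape c (ax v) (h v) (w v) \<subseteq> L_horiz c (ax a) (h a) (w a)) \<and>
     (\<forall>b\<in>B. \<forall>v\<in>A \<union> B. v \<noteq> b \<longrightarrow>
        L_shape c (ax b) (h b) (w b) \<inter> L_shape c (ax v) (h v) (w v) \<subseteq> L_vert c (ax b) (h b))"

definition has_nice_grounded_L_rep :: "'v set \<Rightarrow> 'v set \<Rightarrow> ('v \<Rightarrow> 'v \<Rightarrow> bool) \<Rightarrow> bool" where
  "has_nice_grounded_L_rep A B E \<longleftrightarrow> (\<exists>c ax h w. nice_grounded_L_rep A B E c ax h w)"

text \<open>Stick representation with vertical segments for P and horizontal segments for Q,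
  ground line y = d - x (slope -1): the vertical segment of v \<in> P has bottom end-point
  (p, d - p) and the horizontal segment of v \<in> Q has left end-point (p, d - p).\<close>
definition stick_rep :: "'v set \<Rightarrow> 'v set \<Rightarrow> ('v \<Rightarrow> 'v \<Rightarrow> bool) \<Rightarrow> bool" where
  "stick_rep P Q E \<longleftrightarrow>
     (\<exists>d::real. \<exists>S :: 'v \<Rightarrow> (real \<times> real) set.
        (\<forall>v\<in>P. \<exists>p l. l > 0 \<and> S v = vseg p (d - p) (d - p + l)) \<and>
        (\<forall>v\<in>Q. \<exists>p l. l > 0 \<and> S v = hseg (d - p) p (p + l)) \<and>
        (\<forall>u\<in>P \<union> Q. \<forall>v\<in>P \<union> Q. u \<noteq> v \<longrightarrow> (E u v \<longleftrightarrow> S u \<inter> S v \<noteq> {})))"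

definition stick_graph :: "'v set \<Rightarrow> 'v set \<Rightarrow> ('v \<Rightarrow> 'v \<Rightarrow> bool) \<Rightarrow> bool" where
  "stick_graph A B E \<longleftrightarrow> bipartite_graph A B E \<and> (stick_rep A B E \<or> stick_rep B A E)"

end

theory Submission
  imports Defs
begin

text \<open>In a nice representation, a \<in> A and b \<in> B are adjacent iff the horizontal segment of a
  reaches the vertical segment of b: ax a \<le> ax b \<le> ax a + w a and h a \<le> h b. Keep every
  anchor abscissa p and let the stick of each vertex start at (p, -p): horizontal of length w a
  for a \<in> A, vertical for b \<in> B. The sticks of a and b then meet iff the x-range condition
  holds and ax b - ax a is at most the length of the stick of b, so the height condition must be
  re-encoded by that length. Take it to be the distance from b to its leftmost neighbour a'.
  A non-neighbour a of b with ax a' < ax a < ax b \<le> ax a + w a cannot exist: its vertical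
  segment crosses the horizontal segment of a' unless h a < h a' \<le> h b, and then a and b are
  adjacent. Anchors are pairwise distinct, which keeps sticks of the same class apart.\<close>

lemma mem_vseg [simp]: "(x, y) \<in> vseg x0 y1 y2 \<longleftrightarrow> x = x0 \<and> y1 \<le> y \<and> y \<le> y2"
  by (auto simp: vseg_def)

lemma mem_hseg [simp]: "(x, y) \<in> hseg y0 x1 x2 \<longleftrightarrow> y = y0 \<and> x1 \<le> x \<and> x \<le> x2"
  by (auto simp: hseg_def)

lemma mem_L_shape [simp]:
  "(x, y) \<in> L_shape c a h w \<longleftrightarrow>
     (x = a \<and> c - h \<le> y \<and> y \<le> c) \<or> (y = c - h \<and> a \<le> x \<and> x \<le> a + w)"
  by (simp add: L_shape_def L_vert_def L_horiz_def)

lemma hseg_Int_vseg_eq_empty_iff: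
  "hseg y x1 x2 \<inter> vseg x y1 y2 = {} \<longleftrightarrow> \<not> (x1 \<le> x \<and> x \<le> x2 \<and> y1 \<le> y \<and> y \<le> y2)"
proof -
  have "p \<in> hseg y x1 x2 \<inter> vseg x y1 y2 \<longleftrightarrow>
          p = (x, y) \<and> x1 \<le> x \<and> x \<le> x2 \<and> y1 \<le> y \<and> y \<le> y2" for p
    by (cases p) auto
  then show ?thesis by blast
qed

lemma hseg_Int_hseg_eq_empty: "y \<noteq> y' \<Longrightarrow> hseg y x1 x2 \<inter> hseg y' x1' x2' = {}"
  by (auto simp: hseg_def)

lemma vseg_Int_vseg_eq_empty: "x \<noteq> x' \<Longrightarrow> vseg x y1 y2 \<inter> vseg x' y1' y2' = {}"
  by (auto simp: vseg_def)

lemma grounded_L_rep_lengths_pos: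
  "grounded_L_rep V E c ax h w \<Longrightarrow> v \<in> V \<Longrightarrow> h v > 0 \<and> w v > 0"
  by (simp add: grounded_L_rep_def)

lemma grounded_L_rep_adjacent_iff:
  "grounded_L_rep V E c ax h w \<Longrightarrow> u \<in> V \<Longrightarrow> v \<in> V \<Longrightarrow> u \<noteq> v \<Longrightarrow>
     E u v \<longleftrightarrow> L_shape c (ax u) (h u) (w u) \<inter> L_shape c (ax v) (h v) (w v) \<noteq> {}"
  by (simp add: grounded_L_rep_def)

lemma grounded_L_rep_same_anchor_adjacent:
  assumes "grounded_L_rep V E c ax h w" "u \<in> V" "v \<in> V" "u \<noteq> v" "ax u = ax v"
  shows "E u v"
proof -
  have "(ax u, c) \<in> L_shape c (ax u) (h u) (w u) \<inter> L_shape c (ax v) (h v) (w v)"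
    using grounded_L_rep_lengths_pos[OF assms(1) assms(2)]
      grounded_L_rep_lengths_pos[OF assms(1) assms(3)] assms by auto
  then show ?thesis using grounded_L_rep_adjacent_iff[OF assms(1-4)] by blast
qed

text \<open>The vertical segment of u would otherwise cross the horizontal segment of v.\<close>
lemma grounded_L_rep_nonadjacent_shorter:
  assumes "grounded_L_rep V E c ax h w" "u \<in> V" "v \<in> V" "\<not> E u v"
    and "ax v < ax u" "ax u \<le> ax v + w v"
  shows "h u < h v"
proof (rule ccontr)
  assume "\<not> h u < h v"
  then have "(ax u, c - h v) \<in> L_shape c (ax u) (h u) (w u) \<inter> L_shape c (ax v) (h v) (w v)"
    using grounded_L_rep_lengths_pos[OF assms(1) assms(2)]
      grounded_L_rep_lengths_pos[OF assms(1) assms(3)] assms by auto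
  moreover have "u \<noteq> v" using assms(5) by auto
  ultimately show False using grounded_L_rep_adjacent_iff[OF assms(1-3)] assms(4) by blast
qed

locale nice_L_representation =
  fixes A B :: "'v set" and E :: "'v \<Rightarrow> 'v \<Rightarrow> bool"
    and c :: real and ax h w :: "'v \<Rightarrow> real"
  assumes bipartite: "bipartite_graph A B E"
    and nice: "nice_grounded_L_rep A B E c ax h w"
begin

lemma grounded: "grounded_L_rep (A \<union> B) E c ax h w"
  using nice by (simp add: nice_grounded_L_rep_def)

lemmas lengths_pos = grounded_L_rep_lengths_pos[OF grounded]

lemma finite_A: "finite A" and finite_B: "finite B" and disjoint: "A \<inter> B = {}"
  and E_sym: "E u v \<Longrightarrow> E v u"
  and E_between: "E u v \<Longrightarrow> (u \<in> A \<and> v \<in> B) \<or> (u \<in> B \<and> v \<in> A)"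
  using bipartite by (auto simp: bipartite_graph_def)

lemma A_meets_on_horiz:
  "a \<in> A \<Longrightarrow> v \<in> A \<union> B \<Longrightarrow> v \<noteq> a \<Longrightarrow>
     L_shape c (ax a) (h a) (w a) \<inter> L_shape c (ax v) (h v) (w v) \<subseteq> L_horiz c (ax a) (h a) (w a)"
  using nice by (simp add: nice_grounded_L_rep_def)

lemma B_meets_on_vert:
  "b \<in> B \<Longrightarrow> v \<in> A \<union> B \<Longrightarrow> v \<noteq> b \<Longrightarrow>
     L_shape c (ax b) (h b) (w b) \<inter> L_shape c (ax v) (h v) (w v) \<subseteq> L_vert c (ax b) (h b)"
  using nice by (simp add: nice_grounded_L_rep_def)

lemma L_shape_Int_eq:
  assumes "a \<in> A" "b \<in> B"
  shows "L_shape c (ax a) (h a) (w a) \<inter> L_shape c (ax b) (h b) (w b) =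
           L_horiz c (ax a) (h a) (w a) \<inter> L_vert c (ax b) (h b)"
proof -
  let ?La = "L_shape c (ax a) (h a) (w a)" and ?Lb = "L_shape c (ax b) (h b) (w b)"
  have "a \<noteq> b" using assms disjoint by blast
  then have "?La \<inter> ?Lb \<subseteq> L_horiz c (ax a) (h a) (w a)" "?Lb \<inter> ?La \<subseteq> L_vert c (ax b) (h b)"
    using A_meets_on_horiz B_meets_on_vert assms by auto
  then show ?thesis by (auto simp: L_shape_def)
qed

lemma edge_iff:
  assumes "a \<in> A" "b \<in> B"
  shows "E a b \<longleftrightarrow> ax a \<le> ax b \<and> ax b \<le> ax a + w a \<and> h a \<le> h b"
proof -
  have "a \<noteq> b" using assms disjoint by blast
  then have "E a b \<longleftrightarrow> L_horiz c (ax a) (h a) (w a) \<inter> L_vert c (ax b) (h b) \<noteq> {}"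
    using grounded_L_rep_adjacent_iff[OF grounded] assms L_shape_Int_eq[OF assms] by auto
  also have "\<dots> \<longleftrightarrow> ax a \<le> ax b \<and> ax b \<le> ax a + w a \<and> h a \<le> h b"
    using lengths_pos[of a] assms by (auto simp: L_horiz_def L_vert_def hseg_Int_vseg_eq_empty_iff)
  finally show ?thesis .
qed

text \<open>Anchors in the same class are separated by independence, across the classes by niceness:
  the common anchor would lie on the vertical segment of the vertex in A.\<close>
lemma inj_on_anchors: "inj_on ax (A \<union> B)"
proof (rule inj_onI, rule ccontr)
  fix u v assume uv: "u \<in> A \<union> B" "v \<in> A \<union> B" "ax u = ax v" "u \<noteq> v"
  have cross: False if "a \<in> A" "b \<in> B" "ax a = ax b" for a b
  proof -
    have "(ax a, c) \<in> L_shape c (ax a) (h a) (w a) \<inter> L_shape c (ax b) (h b) (w b)"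
      using that lengths_pos[of a] lengths_pos[of b] by auto
    then show False
      using L_shape_Int_eq[OF that(1,2)] lengths_pos[of a] that(1) by (auto simp: L_horiz_def)
  qed
  have "E u v" using grounded_L_rep_same_anchor_adjacent[OF grounded] uv by blast
  then consider "u \<in> A" "v \<in> B" | "u \<in> B" "v \<in> A" using E_between by blast
  then show False using cross uv(3) by metis
qed

lemma anchor_le_imp_less: "a \<in> A \<Longrightarrow> b \<in> B \<Longrightarrow> ax a \<le> ax b \<Longrightarrow> ax a < ax b"
  using inj_onD[OF inj_on_anchors, of a b] disjoint by fastforce

text \<open>The stick length of the isolated vertices of B; it undercuts every positive difference
  ax b - ax a (the 1 only keeps the minimum well defined).\<close>
definition gap :: real where
  "gap = Min (insert 1 {ax b - ax a | a b. a \<in> A \<and> b \<in> B \<and> ax a < ax b}) / 2"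

lemma finite_gaps: "finite {ax b - ax a | a b. a \<in> A \<and> b \<in> B \<and> ax a < ax b}"
proof (rule finite_subset)
  show "{ax b - ax a | a b. a \<in> A \<and> b \<in> B \<and> ax a < ax b} \<subseteq> (\<lambda>(a, b). ax b - ax a) ` (A \<times> B)"
    by auto
qed (use finite_A finite_B in blast)

lemma gap_pos: "gap > 0"
  using finite_gaps unfolding gap_def by auto

lemma gap_less:
  assumes "a \<in> A" "b \<in> B" "ax a < ax b"
  shows "gap < ax b - ax a"
proof -
  have "2 * gap \<le> ax b - ax a"
    unfolding gap_def using finite_gaps assms by (auto intro!: Min_le)
  then show ?thesis using gap_pos by linarith
qed

definition stick_length :: "'v \<Rightarrow> real" where
  "stick_length b = Max (insert gap {ax b - ax a | a. a \<in> A \<and> E a b})"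

lemma finite_neighbour_gaps: "finite {ax b - ax a | a. a \<in> A \<and> E a b}"
  using finite_A by simp

lemma stick_length_pos: "stick_length b > 0"
  unfolding stick_length_def using gap_pos finite_neighbour_gaps
  by (simp add: Max_gr_iff)

lemma edge_iff_stick:
  assumes a: "a \<in> A" and b: "b \<in> B"
  shows "E a b \<longleftrightarrow> ax a \<le> ax b \<and> ax b \<le> ax a + w a \<and> ax b - ax a \<le> stick_length b"
proof
  assume "E a b"
  then have "ax b - ax a \<in> insert gap {ax b - ax a | a. a \<in> A \<and> E a b}" using a by blast
  then have "ax b - ax a \<le> stick_length b"
    unfolding stick_length_def using finite_neighbour_gaps by (intro Max_ge) auto
  then show "ax a \<le> ax b \<and> ax b \<le> ax a + w a \<and> ax b - ax a \<le> stick_length b"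
    using edge_iff[OF a b] \<open>E a b\<close> by blast
next
  assume in_range: "ax a \<le> ax b \<and> ax b \<le> ax a + w a \<and> ax b - ax a \<le> stick_length b"
  then have left: "ax a < ax b" using anchor_le_imp_less a b by blast
  have "stick_length b \<in> insert gap {ax b - ax a | a. a \<in> A \<and> E a b}"
    unfolding stick_length_def using finite_neighbour_gaps by (intro Max_in) auto
  moreover have "stick_length b \<noteq> gap" using gap_less[OF a b left] in_range by auto
  ultimately obtain a' where a': "a' \<in> A" "E a' b" "stick_length b = ax b - ax a'" by blast
  show "E a b"
  proof (cases "a = a'")
    case False
    have "ax a \<noteq> ax a'" using inj_onD[OF inj_on_anchors] a a'(1) False by blast
    then have "ax a' < ax a" using in_range a'(3) by linarith
    moreover have "ax a \<le> ax a' + w a'" "h a' \<le> h b" using edge_iff[OF a'(1) b] a'(2) in_range by auto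
    moreover have "\<not> E a a'" using E_between a a'(1) disjoint by blast
    ultimately have "h a < h a'"
      using grounded_L_rep_nonadjacent_shorter[OF grounded] a a'(1) by blast
    then show ?thesis using edge_iff[OF a b] in_range \<open>h a' \<le> h b\<close> by auto
  qed (use a' in blast)
qed

definition stick :: "'v \<Rightarrow> (real \<times> real) set" where
  "stick v = (if v \<in> B then vseg (ax v) (- ax v) (- ax v + stick_length v)
              else hseg (- ax v) (ax v) (ax v + w v))"

lemma edge_iff_sticks_meet:
  assumes "a \<in> A" "b \<in> B"
  shows "E a b \<longleftrightarrow> stick a \<inter> stick b \<noteq> {}"
proof -
  have "a \<notin> B" using assms disjoint by blast
  then show ?thesis
    using edge_iff_stick[OF assms] assms
    by (auto simp: stick_def Int_commute hseg_Int_vseg_eq_empty_iff)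
qed

lemma sticks_disjoint_within_class:
  assumes "u \<in> A \<and> v \<in> A \<or> u \<in> B \<and> v \<in> B" "u \<noteq> v"
  shows "stick u \<inter> stick v = {}"
proof -
  have "ax u \<noteq> ax v" using inj_onD[OF inj_on_anchors] assms by blast
  then show ?thesis
    using assms disjoint hseg_Int_hseg_eq_empty[of "- ax u" "- ax v"] vseg_Int_vseg_eq_empty
    by (auto simp: stick_def)
qed

lemma stick_rep: "stick_rep B A E"
  unfolding stick_rep_def
proof (rule exI[of _ 0], rule exI[of _ stick], intro conjI ballI impI)
  show "\<exists>p l. l > 0 \<and> stick v = vseg p (0 - p) (0 - p + l)" if "v \<in> B" for v
    using that stick_length_pos by (auto simp: stick_def)
  show "\<exists>p l. l > 0 \<and> stick v = hseg (0 - p) p (p + l)" if "v \<in> A" for v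
    using that lengths_pos disjoint by (auto simp: stick_def)
  show "E u v \<longleftrightarrow> stick u \<inter> stick v \<noteq> {}" if uv: "u \<in> B \<union> A" "v \<in> B \<union> A" "u \<noteq> v" for u v
  proof -
    consider "u \<in> A \<and> v \<in> A \<or> u \<in> B \<and> v \<in> B" | "u \<in> A" "v \<in> B" | "u \<in> B" "v \<in> A"
      using uv by blast
    then show ?thesis
    proof cases
      case 1
      then show ?thesis using sticks_disjoint_within_class uv(3) E_between disjoint by blast
    next
      case 2
      then show ?thesis using edge_iff_sticks_meet by blast
    next
      case 3
      then show ?thesis using edge_iff_sticks_meet E_sym by (metis Int_commute)
    qed
  qed
qed

end

theorem proposition2:
  fixes A B :: "'v set" and E :: "'v \<Rightarrow> 'v \<Rightarrow> bool"
  assumes "bipartite_graph A B E"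
    and "has_nice_grounded_L_rep A B E"
  shows "stick_graph A B E"
proof -
  obtain c ax h w where "nice_grounded_L_rep A B E c ax h w"
    using assms(2) unfolding has_nice_grounded_L_rep_def by blast
  with assms(1) interpret nice_L_representation A B E c ax h w
    by unfold_locales
  show ?thesis
    unfolding stick_graph_def using assms(1) stick_rep by blast
qed

end
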